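(* Let $h:[u]\to[t]$ be a 5-independent hash function, where $t$ is a power of two, and let $S\subseteq[u]$ be a set of $n$ keys with $t\ge\frac32 n$, stored in a linear probing table of size $t$ using $h$. Then for any key $q\in[u]$, the expected time to search, insert or delete $q$ is $O(1)$; equivalently, the expected number of positions from $h(q)$ up to the first empty position at or after $h(q)$ is bounded by an absolute constant.
   Context: Let $[s]=\{0,\dots,s-1\}$. A random hash function $h:[u]\to[t]$ is $k$-independent if for any distinct keys $x_0,\dots,x_{k-1}\in[u]$ and any $y_0,\dots,y_{k-1}\in[t]$, $\Pr[h(x_0)=y_0\wedge\dots\wedge h(x_{k-1})=y_{k-1}]=1/t^k$. Linear probing: a table of size $t$ with hash function $h$; positions are indexed by nonnegative integers (wrap-around ignored), each either empty or holding one key. Keys of $S$ are inserted starting from an empty table; a key $x$ is inserted by scanning positions $h(x),h(x)+1,\dots$ and placing $x$ in the first empty one. Search, insertion and deletion of a key $x$ take time at most proportional to the number of positions from $h(x)$ to the first empty position at or after $h(x)$. *)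

theory Defs
  imports "HOL-Probability.Probability"
begin

text \<open>A random hash function is a probability distribution (pmf) over functions
  nat \<Rightarrow> nat; keys are [u] = {..<u}, hash values [t] = {..<t}.\<close>

definition k_independent :: "nat \<Rightarrow> nat \<Rightarrow> nat \<Rightarrow> (nat \<Rightarrow> nat) pmf \<Rightarrow> bool" where
  "k_independent k u t H \<longleftrightarrow>
     (\<forall>xs ys. length xs = k \<and> length ys = k \<and> distinct xs \<and>
        set xs \<subseteq> {..<u} \<and> set ys \<subseteq> {..<t} \<longrightarrow>
        measure_pmf.prob H {h. \<forall>i<k. h (xs ! i) = ys ! i} = 1 / real t ^ k)"

text \<open>A linear probing table: positions are natural numbers (no wrap-around),
  each either empty (None) or holding one key.\<close>
type_synonym lp_table = "nat \<Rightarrow> nat option"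

definition first_empty :: "lp_table \<Rightarrow> nat \<Rightarrow> nat" where
  "first_empty T p = (LEAST i. p \<le> i \<and> T i = None)"

definition lp_insert :: "(nat \<Rightarrow> nat) \<Rightarrow> lp_table \<Rightarrow> nat \<Rightarrow> lp_table" where
  "lp_insert h T x = T(first_empty T (h x) := Some x)"

definition lp_build :: "(nat \<Rightarrow> nat) \<Rightarrow> nat list \<Rightarrow> lp_table" where
  "lp_build h xs = foldl (lp_insert h) (\<lambda>_. None) xs"

definition lp_cost :: "(nat \<Rightarrow> nat) \<Rightarrow> nat list \<Rightarrow> nat \<Rightarrow> nat" where
  "lp_cost h xs q = first_empty (lp_build h xs) (h q) - h q + 1"

end

theory Submission
  imports Defs
begin

text \<open>A search for \<open>q\<close> ends at the first empty position after \<open>h q\<close>, so its cost is at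
  most \<open>L + 1\<close> for the run of \<open>L\<close> occupied positions containing \<open>h q\<close>, and at least \<open>L\<close> keys
  were hashed into this run. If \<open>L \<ge> 4\<close>, take the scale \<open>B = 2 ^ l\<close> with \<open>4 B \<le> L < 8 B\<close>:
  one of the twelve aligned buckets of \<open>B\<close> consecutive hash values around \<open>h q\<close> receives more
  than \<open>3 B / 4\<close> keys, while the load \<open>n \<le> 2 t / 3\<close> bounds its expected number of keys by
  \<open>2 B / 3\<close>. Once \<open>h q\<close> is fixed, the excess of a bucket is a sum of centred indicators whose
  fourth moment involves only five hash values at a time, so 5-independence bounds it by
  \<open>O(B\<^sup>2)\<close> exactly as full independence would, and by Markov's inequality the bucket overflows
  with probability \<open>O(B\<^sup>-\<^sup>2)\<close>. Hence the expected cost is at most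
  \<open>4 + \<Sum>\<^sub>l 2 ^ (l + 3) \<cdot> O(4 ^ -l) = O(1)\<close>.\<close>

section \<open>Linear probing\<close>

lemma lp_build_snoc: "lp_build h (xs @ [x]) = lp_insert h (lp_build h xs) x"
  by (simp add: lp_build_def)

lemma first_empty:
  assumes "finite {j. T j \<noteq> None}"
  shows first_empty_ge: "p \<le> first_empty T p"
    and first_empty_free: "T (first_empty T p) = None"
    and occupied_before_first_empty: "\<And>i. p \<le> i \<Longrightarrow> i < first_empty T p \<Longrightarrow> T i \<noteq> None"
proof -
  obtain m where "\<And>j. T j \<noteq> None \<Longrightarrow> j < m"
    using assms by (auto simp: finite_nat_set_iff_bounded)
  then have ex: "\<exists>i. p \<le> i \<and> T i = None"
    by (intro exI[of _ "p + m"]) force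
  have "p \<le> first_empty T p \<and> T (first_empty T p) = None"
    unfolding first_empty_def by (rule LeastI_ex[OF ex])
  then show "p \<le> first_empty T p" "T (first_empty T p) = None"
    by simp_all
  show "T i \<noteq> None" if "p \<le> i" "i < first_empty T p" for i
    using that not_less_Least[of i "\<lambda>i. p \<le> i \<and> T i = None"] unfolding first_empty_def by auto
qed

definition lp_invariant :: "(nat \<Rightarrow> nat) \<Rightarrow> nat list \<Rightarrow> lp_table \<Rightarrow> bool" where
  "lp_invariant h xs T \<longleftrightarrow> finite {j. T j \<noteq> None} \<and>
     (\<forall>j x. T j = Some x \<longrightarrow> x \<in> set xs \<and> h x \<le> j \<and> (\<forall>i. h x \<le> i \<and> i < j \<longrightarrow> T i \<noteq> None)) \<and>
     (\<forall>j j' x. T j = Some x \<and> T j' = Some x \<longrightarrow> j = j')"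

lemma lp_invariant_lp_build:
  assumes "distinct xs"
  shows "lp_invariant h xs (lp_build h xs)"
  using assms
proof (induction xs rule: rev_induct)
  case Nil
  show ?case by (simp add: lp_invariant_def lp_build_def)
next
  case (snoc x xs)
  define T where "T = lp_build h xs"
  define f where "f = first_empty T (h x)"
  have inv: "lp_invariant h xs T" and new: "x \<notin> set xs"
    using snoc by (simp_all add: T_def)
  then have fin: "finite {j. T j \<noteq> None}" unfolding lp_invariant_def by blast
  have f: "h x \<le> f" "T f = None" "\<And>i. h x \<le> i \<Longrightarrow> i < f \<Longrightarrow> T i \<noteq> None"
    using first_empty[OF fin] unfolding f_def by blast+
  have build: "lp_build h (xs @ [x]) = T(f := Some x)"
    by (simp add: lp_build_snoc lp_insert_def T_def f_def)
  have "finite {j. (T(f := Some x)) j \<noteq> None}"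
    using fin by (simp add: Collect_disj_eq insert_Collect[symmetric])
  moreover have "\<forall>j y. (T(f := Some x)) j = Some y \<longrightarrow> y \<in> set (xs @ [x]) \<and> h y \<le> j \<and>
      (\<forall>i. h y \<le> i \<and> i < j \<longrightarrow> (T(f := Some x)) i \<noteq> None)"
    using inv f unfolding lp_invariant_def by auto
  moreover have "\<forall>j j' y. (T(f := Some x)) j = Some y \<and> (T(f := Some x)) j' = Some y \<longrightarrow> j = j'"
  proof (intro allI impI)
    fix j j' y
    assume "(T(f := Some x)) j = Some y \<and> (T(f := Some x)) j' = Some y"
    moreover have "T i \<noteq> Some x" for i
      using inv new unfolding lp_invariant_def by blast
    ultimately show "j = j'"
      using inv unfolding lp_invariant_def by (auto split: if_splits)
  qed
  ultimately show ?case
    unfolding build lp_invariant_def by blast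
qed

lemma exists_occupied_run:
  fixes T :: "nat \<Rightarrow> 'a option"
  shows "\<exists>a\<le>p. (a = 0 \<or> T (a - 1) = None) \<and> (\<forall>i. a \<le> i \<and> i < p \<longrightarrow> T i \<noteq> None)"
proof (induction p)
  case (Suc p)
  then obtain a where a: "a \<le> p" "a = 0 \<or> T (a - 1) = None" "\<forall>i. a \<le> i \<and> i < p \<longrightarrow> T i \<noteq> None"
    by blast
  show ?case
  proof (cases "T p = None")
    case True
    then show ?thesis by (intro exI[of _ "Suc p"]) auto
  next
    case False
    then show ?thesis using a by (intro exI[of _ a]) (auto simp: less_Suc_eq)
  qed
qed simp

text \<open>Every key stored in a run that starts right after an empty position was hashed into
  the run, so the run's positions inject into the keys hashed into it.\<close>

lemma card_run_le_card_hashed_into: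
  assumes inv: "lp_invariant h xs T"
    and start: "a = 0 \<or> T (a - 1) = None"
    and run: "\<And>i. a \<le> i \<Longrightarrow> i < s \<Longrightarrow> T i \<noteq> None"
  shows "s - a \<le> card {x\<in>set xs. a \<le> h x \<and> h x < s}"
proof -
  define key where "key = (\<lambda>j. the (T j))"
  have stored: "\<And>j. j \<in> {a..<s} \<Longrightarrow> T j = Some (key j)"
    using run by (auto simp: key_def)
  have "inj_on key {a..<s}"
    using inv stored unfolding lp_invariant_def inj_on_def by metis
  moreover have "key ` {a..<s} \<subseteq> {x\<in>set xs. a \<le> h x \<and> h x < s}"
  proof (rule image_subsetI)
    fix j assume j: "j \<in> {a..<s}"
    have "key j \<in> set xs" "h (key j) \<le> j" and before: "\<forall>i. h (key j) \<le> i \<and> i < j \<longrightarrow> T i \<noteq> None"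
      using inv stored[OF j] unfolding lp_invariant_def by blast+
    moreover have "a \<le> h (key j)"
    proof (rule ccontr)
      assume "\<not> a \<le> h (key j)"
      then have "0 < a" "h (key j) \<le> a - 1" "a - 1 < j"
        using j by auto
      then show False
        using start before[rule_format, of "a - 1"] by auto
    qed
    ultimately show "key j \<in> {x\<in>set xs. a \<le> h x \<and> h x < s}"
      using j by auto
  qed
  ultimately show ?thesis
    using card_inj_on_le[of key "{a..<s}"] by fastforce
qed

lemma lp_build_run:
  assumes "distinct xs"
  obtains a where "a \<le> p" "p \<le> first_empty (lp_build h xs) p"
    "\<And>s. a \<le> s \<Longrightarrow> s \<le> first_empty (lp_build h xs) p \<Longrightarrow>
       s - a \<le> card {x\<in>set xs. a \<le> h x \<and> h x < s}"
proof -
  define T where "T = lp_build h xs"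
  have inv: "lp_invariant h xs T"
    using lp_invariant_lp_build[OF assms] by (simp add: T_def)
  then have fin: "finite {j. T j \<noteq> None}"
    unfolding lp_invariant_def by blast
  obtain a where a: "a \<le> p" "a = 0 \<or> T (a - 1) = None" "\<forall>i. a \<le> i \<and> i < p \<longrightarrow> T i \<noteq> None"
    using exists_occupied_run by blast
  have "a \<le> i \<Longrightarrow> i < first_empty T p \<Longrightarrow> T i \<noteq> None" for i
    using a(3) occupied_before_first_empty[OF fin, of p i] by (cases "i < p") auto
  then show ?thesis
    using that[OF a(1)] first_empty_ge[OF fin] card_run_le_card_hashed_into[OF inv a(2)]
    unfolding T_def by force
qed

lemma lp_cost_run:
  assumes "distinct xs"
  obtains a L where "a \<le> h q" "h q \<le> a + L" "lp_cost h xs q \<le> L + 1" "L \<le> length xs"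
    "\<And>s. a \<le> s \<Longrightarrow> s \<le> a + L \<Longrightarrow> s - a \<le> card {x\<in>set xs. a \<le> h x \<and> h x < s}"
proof -
  let ?f = "first_empty (lp_build h xs) (h q)"
  obtain a where a: "a \<le> h q" "h q \<le> ?f"
    and run: "\<And>s. a \<le> s \<Longrightarrow> s \<le> ?f \<Longrightarrow> s - a \<le> card {x\<in>set xs. a \<le> h x \<and> h x < s}"
    using lp_build_run[OF assms] by blast
  have "card {x\<in>set xs. a \<le> h x \<and> h x < ?f} \<le> length xs"
    by (rule le_trans[OF card_mono card_length]) auto
  then have "?f - a \<le> length xs"
    using run[of ?f] a by linarith
  moreover have "lp_cost h xs q \<le> ?f - a + 1"
    using a unfolding lp_cost_def by linarith
  ultimately show ?thesis
    using that[of a "?f - a"] a run by simp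
qed

lemma lp_cost_le_length:
  assumes "distinct xs"
  shows "lp_cost h xs q \<le> length xs + 1"
proof -
  obtain L where "lp_cost h xs q \<le> L + 1" "L \<le> length xs"
    using lp_cost_run[OF assms] by blast
  then show ?thesis
    by linarith
qed

lemma exists_overfull_of_four_buckets:
  assumes "0 < B" "finite X" "3 * B < card {x\<in>X. a \<le> h x \<and> h x < (a div B + 4) * B}"
  shows "\<exists>r<4. 3 * B < 4 * card {x\<in>X. h x div B = a div B + r}"
proof (rule ccontr)
  assume "\<not> ?thesis"
  then have small: "\<And>r. r < 4 \<Longrightarrow> 4 * card {x\<in>X. h x div B = a div B + r} \<le> 3 * B"
    using not_less by blast
  have "{x\<in>X. a \<le> h x \<and> h x < (a div B + 4) * B} \<subseteq> (\<Union>r<4. {x\<in>X. h x div B = a div B + r})"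
  proof clarify
    fix x assume "x \<in> X" "a \<le> h x" "h x < (a div B + 4) * B"
    moreover from this have "a div B \<le> h x div B" "h x div B < a div B + 4"
      using \<open>0 < B\<close> by (auto simp: div_le_mono div_less_iff_less_mult)
    ultimately show "x \<in> (\<Union>r<4. {x\<in>X. h x div B = a div B + r})"
      by (auto intro!: bexI[of _ "h x div B - a div B"])
  qed
  then have "card {x\<in>X. a \<le> h x \<and> h x < (a div B + 4) * B} \<le> card (\<Union>r<4. {x\<in>X. h x div B = a div B + r})"
    using \<open>finite X\<close> by (intro card_mono) auto
  also have "\<dots> \<le> (\<Sum>r<4. card {x\<in>X. h x div B = a div B + r})"
    by (rule card_UN_le) simp
  also have "\<dots> \<le> 3 * B"
    using sum_bounded_above[of "{..<4::nat}" "\<lambda>r. 4 * card {x\<in>X. h x div B = a div B + r}" "3 * B"] small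
    by (simp add: sum_distrib_left[symmetric])
  finally show False
    using assms(3) by linarith
qed

text \<open>A run of length \<open>L \<ge> 4 B\<close> starting at \<open>a\<close> covers the four aligned buckets of size \<open>B\<close>
  starting with the one of \<open>a\<close>; if \<open>L < 8 B\<close>, these lie among the twelve buckets around
  any position \<open>p\<close> of the run.\<close>

lemma run_has_overfull_bucket:
  assumes "0 < B" "finite X" "4 * B \<le> L" "L < 8 * B" "a \<le> p" "p \<le> a + L"
    and run: "\<And>s. a \<le> s \<Longrightarrow> s \<le> a + L \<Longrightarrow> s - a \<le> card {x\<in>X. a \<le> h x \<and> h x < s}"
  shows "\<exists>j<12. 3 * B < 4 * card {x\<in>X. h x div B = p div B + 3 - j}"
proof -
  have a: "a div B * B \<le> a" "a < a div B * B + B"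
    using div_mult_mod_eq[of a B] mod_less_divisor[OF assms(1), of a] by linarith+
  then have "a \<le> a div B * B + 4 * B" "a div B * B + 4 * B \<le> a + L" "3 * B < a div B * B + 4 * B - a"
    using assms(3) by linarith+
  then have "3 * B < card {x\<in>X. a \<le> h x \<and> h x < (a div B + 4) * B}"
    using run[of "a div B * B + 4 * B"] by (simp add: algebra_simps)
  then obtain r where r: "r < 4" "3 * B < 4 * card {x\<in>X. h x div B = a div B + r}"
    using exists_overfull_of_four_buckets[OF assms(1,2)] by blast
  have "a div B \<le> p div B"
    using assms(5) by (simp add: div_le_mono)
  moreover have "p div B < a div B + 9"
  proof -
    have "p < a div B * B + 9 * B"
      using a assms(4,6) by linarith
    then show ?thesis
      using assms(1) by (simp add: div_less_iff_less_mult algebra_simps)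
  qed
  ultimately show ?thesis
    using r by (intro exI[of _ "p div B + 3 - (a div B + r)"]) auto
qed

lemma lp_cost_overfull_bucket:
  assumes "distinct xs" and "4 < lp_cost h xs q"
  shows "\<exists>l j. l < length xs \<and> j < 12 \<and> lp_cost h xs q \<le> 2 ^ (l + 3) \<and>
    3 * 2 ^ l < 4 * card {x\<in>set xs. h x div 2 ^ l = h q div 2 ^ l + 3 - j}"
proof -
  obtain a L where a: "a \<le> h q" "h q \<le> a + L" and L: "lp_cost h xs q \<le> L + 1" "L \<le> length xs"
    and run: "\<And>s. a \<le> s \<Longrightarrow> s \<le> a + L \<Longrightarrow> s - a \<le> card {x\<in>set xs. a \<le> h x \<and> h x < s}"
    using lp_cost_run[OF assms(1)] by blast
  have "1 \<le> L div 4"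
    using assms(2) L by linarith
  then obtain l where l: "2 ^ l \<le> L div 4" "L div 4 < 2 ^ (l + 1)"
    using ex_power_ivl1[of 2 "L div 4"] by auto
  then have B: "0 < (2::nat) ^ l" "4 * 2 ^ l \<le> L" "L < 8 * 2 ^ l"
    by auto
  have "l < length xs"
    using less_exp[of l] B L by linarith
  moreover have "lp_cost h xs q \<le> 2 ^ (l + 3)"
    using B L by (simp add: power_add)
  moreover have "\<exists>j<12. 3 * 2 ^ l < 4 * card {x\<in>set xs. h x div 2 ^ l = h q div 2 ^ l + 3 - j}"
    using run_has_overfull_bucket[OF B(1) _ B(2,3) a run] by simp
  ultimately show ?thesis
    by blast
qed

section \<open>Fourth moments of sums of independent centred indicators\<close>

lemma finite_set_pmf_Pi_pmf:
  "finite S \<Longrightarrow> finite (set_pmf U) \<Longrightarrow> finite (set_pmf (Pi_pmf S d (\<lambda>_. U)))"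
  by (auto simp: set_Pi_pmf intro!: finite_PiE_dflt)

lemma expectation_pair_pmf_mult:
  fixes a :: "'a \<Rightarrow> real" and b :: "'b \<Rightarrow> real"
  assumes "finite (set_pmf A)" "finite (set_pmf B)"
  shows "measure_pmf.expectation (pair_pmf A B) (\<lambda>w. a (fst w) * b (snd w)) =
         measure_pmf.expectation A a * measure_pmf.expectation B b"
proof -
  have "measure_pmf.expectation (pair_pmf A B) (\<lambda>w. a (fst w) * b (snd w)) =
      (\<Sum>w\<in>set_pmf A \<times> set_pmf B. a (fst w) * b (snd w) * pmf (pair_pmf A B) w)"
    using assms by (intro integral_measure_pmf_real) auto
  also have "\<dots> = (\<Sum>x\<in>set_pmf A. a x * pmf A x) * (\<Sum>y\<in>set_pmf B. b y * pmf B y)"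
    unfolding sum_product sum.cartesian_product by (intro sum.cong) (auto simp: pmf_pair)
  also have "\<dots> = measure_pmf.expectation A a * measure_pmf.expectation B b"
    using assms by (simp add: integral_measure_pmf_real)
  finally show ?thesis .
qed

lemma expectation_Pi_pmf_insert:
  fixes F :: "('a \<Rightarrow> 'b) \<Rightarrow> real"
  assumes "finite S" "x \<notin> S"
  shows "measure_pmf.expectation (Pi_pmf (insert x S) d P) F =
    measure_pmf.expectation (pair_pmf (P x) (Pi_pmf S d P)) (\<lambda>w. F ((snd w)(x := fst w)))"
  using assms by (simp add: Pi_pmf_insert case_prod_unfold)

text \<open>Expanding \<open>(Y + Z)\<^sup>4\<close> for independent \<open>Y\<close> and \<open>Z\<close>, the terms that are odd in \<open>Y\<close>
  or in \<open>Z\<close> vanish because both are centred.\<close>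

lemma moments_add_independent:
  fixes U :: "'a pmf" and M :: "'b pmf" and Y :: "'a \<Rightarrow> real" and Z :: "'b \<Rightarrow> real" and n p :: real
  assumes U: "finite (set_pmf U)" and M: "finite (set_pmf M)" and p: "0 \<le> p"
    and EY: "measure_pmf.expectation U Y = 0"
    and EY2: "measure_pmf.expectation U (\<lambda>y. Y y ^ 2) \<le> p"
    and EY4: "measure_pmf.expectation U (\<lambda>y. Y y ^ 4) \<le> p"
    and EZ: "measure_pmf.expectation M Z = 0"
    and EZ2: "measure_pmf.expectation M (\<lambda>z. Z z ^ 2) \<le> n * p"
    and EZ4: "measure_pmf.expectation M (\<lambda>z. Z z ^ 4) \<le> n * p + 3 * n ^ 2 * p ^ 2"
  shows "measure_pmf.expectation (pair_pmf U M) (\<lambda>w. Y (fst w) + Z (snd w)) = 0"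
    and "measure_pmf.expectation (pair_pmf U M) (\<lambda>w. (Y (fst w) + Z (snd w)) ^ 2) \<le> (n + 1) * p"
    and "measure_pmf.expectation (pair_pmf U M) (\<lambda>w. (Y (fst w) + Z (snd w)) ^ 4)
      \<le> (n + 1) * p + 3 * (n + 1) ^ 2 * p ^ 2"
proof -
  have int: "integrable (measure_pmf (pair_pmf U M)) g" for g :: "'a \<times> 'b \<Rightarrow> real"
    using U M by (intro integrable_measure_pmf_finite) simp
  note mult = expectation_pair_pmf_mult[OF U M]
  have moment_U: "measure_pmf.expectation (pair_pmf U M) (\<lambda>w. Y (fst w) ^ j) = measure_pmf.expectation U (\<lambda>y. Y y ^ j)"
    and moment_M: "measure_pmf.expectation (pair_pmf U M) (\<lambda>w. Z (snd w) ^ j) = measure_pmf.expectation M (\<lambda>z. Z z ^ j)"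
    for j :: nat
    by (rule expectation_pair_pmf_fst[of _ _ "\<lambda>y. Y y ^ j"], rule expectation_pair_pmf_snd[of _ _ "\<lambda>z. Z z ^ j"])
  show "measure_pmf.expectation (pair_pmf U M) (\<lambda>w. Y (fst w) + Z (snd w)) = 0"
    using EY EZ by (simp add: int)
  have binomial2: "(a + b) ^ 2 = a ^ 2 + 2 * (a * b) + b ^ 2" for a b :: real
    by (simp add: power2_eq_square algebra_simps)
  have "measure_pmf.expectation (pair_pmf U M) (\<lambda>w. (Y (fst w) + Z (snd w)) ^ 2) =
      measure_pmf.expectation U (\<lambda>y. Y y ^ 2) + 2 * (measure_pmf.expectation U Y * measure_pmf.expectation M Z)
      + measure_pmf.expectation M (\<lambda>z. Z z ^ 2)"
    by (simp add: binomial2 int mult[of Y Z] moment_U moment_M)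
  then show "measure_pmf.expectation (pair_pmf U M) (\<lambda>w. (Y (fst w) + Z (snd w)) ^ 2) \<le> (n + 1) * p"
    using EY EY2 EZ2 by (simp add: algebra_simps)
  have binomial4: "(a + b) ^ 4 = a ^ 4 + 4 * (a ^ 3 * b) + 6 * (a ^ 2 * b ^ 2) + 4 * (a * b ^ 3) + b ^ 4"
    for a b :: real
    by (simp add: power4_eq_xxxx power3_eq_cube power2_eq_square algebra_simps)
  have "measure_pmf.expectation (pair_pmf U M) (\<lambda>w. (Y (fst w) + Z (snd w)) ^ 4) =
      measure_pmf.expectation U (\<lambda>y. Y y ^ 4)
      + 4 * (measure_pmf.expectation U (\<lambda>y. Y y ^ 3) * measure_pmf.expectation M Z)
      + 6 * (measure_pmf.expectation U (\<lambda>y. Y y ^ 2) * measure_pmf.expectation M (\<lambda>z. Z z ^ 2))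
      + 4 * (measure_pmf.expectation U Y * measure_pmf.expectation M (\<lambda>z. Z z ^ 3))
      + measure_pmf.expectation M (\<lambda>z. Z z ^ 4)"
    by (simp add: binomial4 int moment_U moment_M mult[of "\<lambda>y. Y y ^ 3" Z]
        mult[of "\<lambda>y. Y y ^ 2" "\<lambda>z. Z z ^ 2"] mult[of Y "\<lambda>z. Z z ^ 3"])
  also have "\<dots> \<le> p + 6 * (p * (n * p)) + (n * p + 3 * n ^ 2 * p ^ 2)"
  proof -
    have "measure_pmf.expectation U (\<lambda>y. Y y ^ 2) * measure_pmf.expectation M (\<lambda>z. Z z ^ 2)
        \<le> p * (n * p)"
      by (rule mult_mono[OF EY2 EZ2 p]) (auto intro: integral_nonneg_AE)
    then show ?thesis
      using EY EZ EY4 EZ4 by simp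
  qed
  also have "\<dots> \<le> (n + 1) * p + 3 * (n + 1) ^ 2 * p ^ 2"
    using p by (simp add: power2_eq_square algebra_simps)
  finally show "measure_pmf.expectation (pair_pmf U M) (\<lambda>w. (Y (fst w) + Z (snd w)) ^ 4)
      \<le> (n + 1) * p + 3 * (n + 1) ^ 2 * p ^ 2" .
qed

lemma moments_sum_Pi_pmf:
  fixes U :: "'b pmf" and Y :: "'b \<Rightarrow> real" and p :: real
  assumes U: "finite (set_pmf U)"
    and EY: "measure_pmf.expectation U Y = 0"
    and EY2: "measure_pmf.expectation U (\<lambda>y. Y y ^ 2) \<le> p"
    and EY4: "measure_pmf.expectation U (\<lambda>y. Y y ^ 4) \<le> p"
    and S: "finite S"
  shows "measure_pmf.expectation (Pi_pmf S d (\<lambda>_. U)) (\<lambda>f. \<Sum>x\<in>S. Y (f x)) = 0 \<and>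
    measure_pmf.expectation (Pi_pmf S d (\<lambda>_. U)) (\<lambda>f. (\<Sum>x\<in>S. Y (f x)) ^ 2) \<le> card S * p \<and>
    measure_pmf.expectation (Pi_pmf S d (\<lambda>_. U)) (\<lambda>f. (\<Sum>x\<in>S. Y (f x)) ^ 4)
      \<le> card S * p + 3 * real (card S) ^ 2 * p ^ 2"
  using S
proof (induction S rule: finite_induct)
  case (insert x S)
  define M where "M = Pi_pmf S d (\<lambda>_. U)"
  define Z where "Z = (\<lambda>f. \<Sum>x\<in>S. Y (f x))"
  have "0 \<le> measure_pmf.expectation U (\<lambda>y. Y y ^ 2)"
    by (intro integral_nonneg_AE) auto
  then have "0 \<le> p"
    using EY2 by linarith
  moreover have "finite (set_pmf M)"
    unfolding M_def by (rule finite_set_pmf_Pi_pmf[OF insert(1) U])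
  moreover have "(\<Sum>x'\<in>insert x S. Y ((f(x := y)) x')) = Y y + Z f" for f y
    using insert(1,2) unfolding Z_def by (auto intro!: sum.cong)
  ultimately show ?case
    using moments_add_independent[OF U _ _ EY EY2 EY4, where M = M and n = "card S" and Z = Z] insert
    unfolding M_def Z_def by (simp add: expectation_Pi_pmf_insert add.commute)
qed simp

lemma centered_indicator_moments:
  fixes U :: "'a pmf" and A :: "'a set"
  assumes U: "finite (set_pmf U)"
  defines "p \<equiv> measure_pmf.prob U A"
  shows "measure_pmf.expectation U (\<lambda>y. indicator A y - p) = 0"
    and "measure_pmf.expectation U (\<lambda>y. (indicator A y - p) ^ 2) \<le> p"
    and "measure_pmf.expectation U (\<lambda>y. (indicator A y - p) ^ 4) \<le> p"
proof -
  have int: "integrable (measure_pmf U) g" for g :: "'a \<Rightarrow> real"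
    using U by (rule integrable_measure_pmf_finite)
  have p: "0 \<le> p" "p \<le> 1"
    by (simp_all add: p_def)
  have E_indicator: "measure_pmf.expectation U (indicator A) = p"
    by (simp add: p_def)
  then show "measure_pmf.expectation U (\<lambda>y. indicator A y - p) = 0"
    by (simp add: int)
  have square: "(indicator A y - p) ^ 2 = (1 - 2 * p) * indicator A y + p ^ 2" for y
    by (simp add: indicator_def power2_eq_square algebra_simps)
  have E_square: "measure_pmf.expectation U (\<lambda>y. (indicator A y - p) ^ 2) = p - p ^ 2"
    unfolding square using E_indicator by (simp add: int power2_eq_square algebra_simps)
  then show "measure_pmf.expectation U (\<lambda>y. (indicator A y - p) ^ 2) \<le> p"
    by simp
  have "(indicator A y - p) ^ 4 \<le> (indicator A y - p) ^ 2" for y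
  proof -
    have "(indicator A y - p) ^ 2 \<le> 1"
      using p by (simp add: indicator_def abs_square_le_1)
    then show ?thesis
      using mult_right_mono[of "(indicator A y - p) ^ 2" 1 "(indicator A y - p) ^ 2"]
      by (simp add: power4_eq_xxxx power2_eq_square mult.assoc)
  qed
  then have "measure_pmf.expectation U (\<lambda>y. (indicator A y - p) ^ 4)
      \<le> measure_pmf.expectation U (\<lambda>y. (indicator A y - p) ^ 2)"
    by (intro integral_mono int)
  then show "measure_pmf.expectation U (\<lambda>y. (indicator A y - p) ^ 4) \<le> p"
    using E_square zero_le_power2[of p] by linarith
qed

definition bucket_prob :: "nat \<Rightarrow> nat \<Rightarrow> nat \<Rightarrow> real" where
  "bucket_prob t B k = measure_pmf.prob (pmf_of_set {..<t}) {y. y div B = k}"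

definition bucket_excess :: "nat \<Rightarrow> nat \<Rightarrow> nat \<Rightarrow> 'a set \<Rightarrow> ('a \<Rightarrow> nat) \<Rightarrow> real" where
  "bucket_excess t B k S h = (\<Sum>x\<in>S. indicator {y. y div B = k} (h x) - bucket_prob t B k)"

lemma card_bucket_le:
  assumes "0 < B"
  shows "card {y\<in>Y. y div B = k} \<le> B"
proof -
  have "{y\<in>Y. y div B = k} \<subseteq> {k * B..<k * B + B}"
  proof
    fix y assume "y \<in> {y\<in>Y. y div B = k}"
    then have "y = k * B + y mod B"
      using div_mult_mod_eq[of y B] by simp
    then show "y \<in> {k * B..<k * B + B}"
      using mod_less_divisor[OF assms, of y] by (simp only: atLeastLessThan_iff) linarith
  qed
  then show ?thesis
    using card_mono[of "{k * B..<k * B + B}"] by fastforce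
qed

lemma bucket_prob_le:
  assumes "0 < B" "0 < t"
  shows "bucket_prob t B k \<le> B / t"
proof -
  have "card ({..<t} \<inter> {y. y div B = k}) \<le> B"
    using card_bucket_le[OF assms(1), of "{..<t}" k] by (simp add: Int_def)
  moreover have "bucket_prob t B k = card ({..<t} \<inter> {y. y div B = k}) / t"
    using assms(2) unfolding bucket_prob_def by (subst measure_pmf_of_set) auto
  ultimately show ?thesis
    by (simp add: divide_right_mono)
qed

lemma card_mult_bucket_prob_le:
  assumes "0 < B" "0 < t" "3 * card S \<le> 2 * t"
  shows "card S * bucket_prob t B i \<le> 2 * real B / 3"
proof -
  have "card S * bucket_prob t B i \<le> card S * (B / t)"
    using bucket_prob_le[OF assms(1,2)] by (intro mult_left_mono) auto
  also have "\<dots> \<le> 2 * real B / 3"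
  proof -
    have "real (card S) * 3 \<le> 2 * real t"
      using of_nat_mono[OF assms(3), where 'a=real] by simp
    then have "real (card S) * 3 * B \<le> 2 * real t * B"
      by (rule mult_right_mono) simp
    then show ?thesis
      using assms(2) by (simp add: field_simps)
  qed
  finally show ?thesis .
qed

lemma bucket_excess_eq:
  "finite S \<Longrightarrow> bucket_excess t B k S h = card {x\<in>S. h x div B = k} - card S * bucket_prob t B k"
  by (simp add: bucket_excess_def sum_subtractf indicator_def Int_def flip: of_bool_def)

section \<open>5-independent hashing\<close>

definition restrict_keys :: "nat set \<Rightarrow> (nat \<Rightarrow> nat) \<Rightarrow> nat \<Rightarrow> nat" where
  "restrict_keys A h = (\<lambda>x. if x \<in> A then h x else 0)"

lemma prob_eq_sum_over_hash_value:
  fixes H :: "(nat \<Rightarrow> nat) pmf"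
  assumes "\<And>h. h \<in> set_pmf H \<Longrightarrow> h z < t"
  shows "measure_pmf.prob H E = (\<Sum>y<t. measure_pmf.prob H (E \<inter> {h. h z = y}))"
proof -
  have "measure_pmf.prob H E = measure_pmf.prob H (\<Union>y<t. E \<inter> {h. h z = y})"
    using assms by (intro measure_prob_cong_0) (auto simp: set_pmf_eq)
  also have "\<dots> = (\<Sum>y<t. measure_pmf.prob H (E \<inter> {h. h z = y}))"
    by (rule measure_pmf.finite_measure_finite_Union) (auto simp: disjoint_family_on_def)
  finally show ?thesis .
qed

locale k_independent_hashing =
  fixes k u t :: nat and H :: "(nat \<Rightarrow> nat) pmf"
  assumes independent: "k_independent k u t H"
    and hash_range: "\<And>h x. h \<in> set_pmf H \<Longrightarrow> x < u \<Longrightarrow> h x < t"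
    and k_le_u: "k \<le> u"
    and t_pos: "0 < t"
begin

lemma set_pmf_uniform_hash [simp]: "set_pmf (pmf_of_set {..<t}) = {..<t}"
  using t_pos by (subst set_pmf_of_set) auto

lemma prob_agree_on:
  assumes "A \<subseteq> {..<u}" "card A \<le> k" "\<And>x. x \<in> A \<Longrightarrow> g x < t"
  shows "measure_pmf.prob H {h. \<forall>x\<in>A. h x = g x} = 1 / t ^ card A"
  using assms
proof (induction "k - card A" arbitrary: A g)
  case 0
  define xs where "xs = sorted_list_of_set A"
  have A: "finite A" "card A = k"
    using 0 finite_subset by auto
  then have xs: "length xs = k" "distinct xs" "set xs = A"
    by (auto simp: xs_def)
  have "{h. \<forall>i<k. h (xs ! i) = map g xs ! i} = {h. \<forall>x\<in>A. h x = g x}"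
    using xs(1) unfolding xs(3)[symmetric] by (auto simp: all_set_conv_all_nth)
  moreover have "measure_pmf.prob H {h. \<forall>i<k. h (xs ! i) = map g xs ! i} = 1 / t ^ k"
    using independent[unfolded k_independent_def, rule_format, of xs "map g xs"] xs 0 by auto
  ultimately show ?case
    using A by simp
next
  case (Suc m)
  have "finite A"
    using Suc.prems finite_subset by blast
  then have "\<not> {..<u} \<subseteq> A"
    using Suc.hyps k_le_u card_mono[of A "{..<u}"] by auto
  then obtain z where z: "z < u" "z \<notin> A"
    by auto
  have "measure_pmf.prob H {h. \<forall>x\<in>A. h x = g x} =
      (\<Sum>y<t. measure_pmf.prob H ({h. \<forall>x\<in>A. h x = g x} \<inter> {h. h z = y}))"
    using hash_range z by (intro prob_eq_sum_over_hash_value) auto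
  also have "\<dots> = (\<Sum>y<t. 1 / t ^ Suc (card A))"
  proof (rule sum.cong[OF refl])
    fix y assume "y \<in> {..<t}"
    then have "measure_pmf.prob H {h. \<forall>x\<in>insert z A. h x = (g(z := y)) x} = 1 / t ^ card (insert z A)"
      using Suc z \<open>finite A\<close> by (intro Suc.hyps) auto
    moreover have "{h. \<forall>x\<in>A. h x = g x} \<inter> {h. h z = y} = {h. \<forall>x\<in>insert z A. h x = (g(z := y)) x}"
      using z by auto
    ultimately show "measure_pmf.prob H ({h. \<forall>x\<in>A. h x = g x} \<inter> {h. h z = y}) = 1 / t ^ Suc (card A)"
      using z \<open>finite A\<close> by simp
  qed
  also have "\<dots> = 1 / t ^ card A"
    using t_pos by simp
  finally show ?case .
qed

lemma restrict_keys_in_PiE_dflt: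
  "h \<in> set_pmf H \<Longrightarrow> A \<subseteq> {..<u} \<Longrightarrow> restrict_keys A h \<in> PiE_dflt A 0 (\<lambda>_. {..<t})"
  using hash_range by (auto simp: restrict_keys_def PiE_dflt_def)

lemma map_restrict_keys_eq_Pi_pmf:
  assumes A: "A \<subseteq> {..<u}" "card A \<le> k"
  shows "map_pmf (restrict_keys A) H = Pi_pmf A 0 (\<lambda>_. pmf_of_set {..<t})"
proof -
  let ?P = "PiE_dflt A 0 (\<lambda>_. {..<t})"
  have fin: "finite A"
    using A finite_subset by blast
  have P: "finite ?P" "?P \<noteq> {}" "card ?P = t ^ card A"
    using fin t_pos by (auto simp: card_PiE_dflt)
  have "map_pmf (restrict_keys A) H = pmf_of_set ?P"
  proof (rule pmf_eqI)
    fix g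
    show "pmf (map_pmf (restrict_keys A) H) g = pmf (pmf_of_set ?P) g"
    proof (cases "g \<in> ?P")
      case True
      then have "restrict_keys A -` {g} = {h. \<forall>x\<in>A. h x = g x}"
        by (auto simp: restrict_keys_def PiE_dflt_def fun_eq_iff)
      then show ?thesis
        using True P A prob_agree_on[of A g] by (auto simp: pmf_map PiE_dflt_def)
    next
      case False
      then show ?thesis
        using P A restrict_keys_in_PiE_dflt by (auto intro!: pmf_map_outside)
    qed
  qed
  also have "\<dots> = Pi_pmf A 0 (\<lambda>_. pmf_of_set {..<t})"
    by (subst Pi_pmf_of_set) (use fin t_pos in auto)
  finally show ?thesis .
qed

lemma integrable_if_depends_on:
  fixes W :: "(nat \<Rightarrow> nat) \<Rightarrow> real"
  assumes K: "finite K" "K \<subseteq> {..<u}"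
    and W: "\<And>h h'. (\<And>x. x \<in> K \<Longrightarrow> h x = h' x) \<Longrightarrow> W h = W h'"
  shows "integrable (measure_pmf H) W"
proof -
  have "set_pmf (map_pmf (restrict_keys K) H) \<subseteq> PiE_dflt K 0 (\<lambda>_. {..<t})"
    using K restrict_keys_in_PiE_dflt by auto
  moreover have "finite (PiE_dflt K 0 (\<lambda>_. {..<t}))"
    using K(1) by (intro finite_PiE_dflt) auto
  ultimately have "finite (set_pmf (map_pmf (restrict_keys K) H))"
    by (rule finite_subset)
  then have "integrable (measure_pmf (map_pmf (restrict_keys K) H)) W"
    by (rule integrable_measure_pmf_finite)
  then have "integrable (measure_pmf H) (\<lambda>h. W (restrict_keys K h))"
    unfolding integrable_map_pmf_eq .
  moreover have "W (restrict_keys K h) = W h" for h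
    by (rule W) (simp add: restrict_keys_def)
  ultimately show ?thesis
    by simp
qed

lemma expectation_eq_Pi_pmf:
  fixes W :: "(nat \<Rightarrow> nat) \<Rightarrow> real"
  assumes K: "finite K" "K \<subseteq> {..<u}" and A: "A \<subseteq> K" "card A \<le> k"
    and W: "\<And>h h'. (\<And>x. x \<in> A \<Longrightarrow> h x = h' x) \<Longrightarrow> W h = W h'"
  shows "measure_pmf.expectation H W = measure_pmf.expectation (Pi_pmf K 0 (\<lambda>_. pmf_of_set {..<t})) W"
proof -
  have restrict: "W (restrict_keys A h) = W h" for h
    by (rule W) (simp add: restrict_keys_def)
  have "measure_pmf.expectation H W = measure_pmf.expectation (map_pmf (restrict_keys A) H) W"
    using restrict by simp
  also have "map_pmf (restrict_keys A) H = Pi_pmf A 0 (\<lambda>_. pmf_of_set {..<t})"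
    using A K by (intro map_restrict_keys_eq_Pi_pmf) auto
  also have "\<dots> = map_pmf (restrict_keys A) (Pi_pmf K 0 (\<lambda>_. pmf_of_set {..<t}))"
    unfolding restrict_keys_def using A K by (intro Pi_pmf_subset) auto
  finally show ?thesis
    using restrict by simp
qed

text \<open>Each monomial of the expanded fourth power involves at most five hash values.\<close>

lemma expectation_fourth_power_eq_Pi_pmf:
  fixes a Y :: "nat \<Rightarrow> real"
  assumes "5 \<le> k" "q < u" "finite S" "S \<subseteq> {..<u}"
  shows "measure_pmf.expectation H (\<lambda>h. a (h q) * (\<Sum>x\<in>S. Y (h x)) ^ 4) =
    measure_pmf.expectation (Pi_pmf (insert q S) 0 (\<lambda>_. pmf_of_set {..<t}))
      (\<lambda>h. a (h q) * (\<Sum>x\<in>S. Y (h x)) ^ 4)"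
proof -
  let ?P = "Pi_pmf (insert q S) 0 (\<lambda>_. pmf_of_set {..<t})"
  define T where "T x1 x2 x3 x4 h = a (h q) * (Y (h x1) * Y (h x2) * Y (h x3) * Y (h x4))"
    for x1 x2 x3 x4 h
  have expand: "a (h q) * (\<Sum>x\<in>S. Y (h x)) ^ 4 = (\<Sum>x1\<in>S. \<Sum>x2\<in>S. \<Sum>x3\<in>S. \<Sum>x4\<in>S. T x1 x2 x3 x4 h)"
    for h
    by (simp add: T_def power4_eq_xxxx sum_distrib_left sum_distrib_right mult_ac)
  have int_P: "integrable (measure_pmf ?P) g" for g :: "(nat \<Rightarrow> nat) \<Rightarrow> real"
    using assms by (intro integrable_measure_pmf_finite finite_set_pmf_Pi_pmf) auto
  have keys: "finite {q, x1, x2, x3, x4}" "{q, x1, x2, x3, x4} \<subseteq> {..<u}" "card {q, x1, x2, x3, x4} \<le> k"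
    if "x1 \<in> S" "x2 \<in> S" "x3 \<in> S" "x4 \<in> S" for x1 x2 x3 x4
    using that assms card_length[of "[q, x1, x2, x3, x4]"] by auto
  have int_H: "integrable (measure_pmf H) (T x1 x2 x3 x4)"
    if "x1 \<in> S" "x2 \<in> S" "x3 \<in> S" "x4 \<in> S" for x1 x2 x3 x4
    using keys[OF that] by (intro integrable_if_depends_on[of "{q, x1, x2, x3, x4}"]) (auto simp: T_def)
  have same: "measure_pmf.expectation H (T x1 x2 x3 x4) = measure_pmf.expectation ?P (T x1 x2 x3 x4)"
    if "x1 \<in> S" "x2 \<in> S" "x3 \<in> S" "x4 \<in> S" for x1 x2 x3 x4
    using keys[OF that] that assms
    by (intro expectation_eq_Pi_pmf[of "insert q S" "{q, x1, x2, x3, x4}"]) (auto simp: T_def)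
  show ?thesis
    unfolding expand by (simp add: Bochner_Integration.integral_sum integrable_sum int_H int_P same)
qed

end

section \<open>The expected search cost\<close>

text \<open>A majorant of the indicator that the bucket \<open>h q div B + 3 - j\<close> is overfull. Summing
  over the value \<open>v\<close> of \<open>h q\<close> fixes the bucket before the hash values of the other keys are
  looked at, which is what makes its expectation computable; small buckets are bounded by \<open>1\<close>.\<close>

definition overflow_majorant :: "nat \<Rightarrow> nat set \<Rightarrow> nat \<Rightarrow> nat \<Rightarrow> nat \<Rightarrow> (nat \<Rightarrow> nat) \<Rightarrow> real" where
  "overflow_majorant t S q B j h = (if B < 24 then 1 else
     (\<Sum>v<t. of_bool (h q = v) * (24 * bucket_excess t B (v div B + 3 - j) S h / B) ^ 4))"

lemma overflow_majorant_nonneg: "0 \<le> overflow_majorant t S q B j h"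
  by (auto simp: overflow_majorant_def intro!: sum_nonneg)

lemma overflow_majorant_cong:
  assumes "\<And>x. x \<in> insert q S \<Longrightarrow> h x = h' x"
  shows "overflow_majorant t S q B j h = overflow_majorant t S q B j h'"
  using assms by (simp add: overflow_majorant_def bucket_excess_def)

lemma one_le_overflow_majorant:
  assumes S: "finite S" "3 * card S \<le> 2 * t" and "h q < t"
    and overfull: "3 * B < 4 * (card {x\<in>S. h x div B = h q div B + 3 - j} + 1)"
  shows "1 \<le> overflow_majorant t S q B j h"
proof (cases "B < 24")
  case False
  let ?i = "h q div B + 3 - j"
  have "card S * bucket_prob t B ?i \<le> 2 * real B / 3"
    using False \<open>h q < t\<close> S(2) by (intro card_mult_bucket_prob_le) auto
  then have "real B / 24 \<le> bucket_excess t B ?i S h"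
    using overfull False S(1) by (simp add: bucket_excess_eq)
  then have "1 \<le> 24 * bucket_excess t B ?i S h / B"
    using False by (simp add: field_simps)
  then have "1 \<le> (24 * bucket_excess t B ?i S h / B) ^ 4"
    by (rule one_le_power)
  moreover have "overflow_majorant t S q B j h = (24 * bucket_excess t B ?i S h / B) ^ 4"
    using False \<open>h q < t\<close> by (simp add: overflow_majorant_def sum.delta)
  ultimately show ?thesis
    by simp
qed (simp add: overflow_majorant_def)

lemma lp_cost_le_overflow_majorants:
  assumes "distinct xs" "h q < t" "3 * length xs \<le> 2 * t"
  shows "real (lp_cost h xs q) \<le>
    4 + (\<Sum>l<length xs. 2 ^ (l + 3) * (\<Sum>j<12. overflow_majorant t (set xs - {q}) q (2 ^ l) j h))"
    (is "_ \<le> 4 + ?bound")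
proof (cases "lp_cost h xs q \<le> 4")
  case True
  moreover have "0 \<le> ?bound"
    by (intro sum_nonneg mult_nonneg_nonneg) (auto intro: overflow_majorant_nonneg)
  ultimately show ?thesis
    by simp
next
  case False
  then have "4 < lp_cost h xs q"
    by simp
  then obtain l j where lj: "l < length xs" "j < 12" "lp_cost h xs q \<le> 2 ^ (l + 3)"
    and overfull: "3 * 2 ^ l < 4 * card {x\<in>set xs. h x div 2 ^ l = h q div 2 ^ l + 3 - j}"
    using lp_cost_overfull_bucket[OF assms(1)] by blast
  let ?bucket = "\<lambda>X. {x\<in>X. h x div 2 ^ l = h q div 2 ^ l + 3 - j}"
  have "card (?bucket (set xs)) \<le> card (insert q (?bucket (set xs - {q})))"
    by (intro card_mono) auto
  then have "card (?bucket (set xs)) \<le> card (?bucket (set xs - {q})) + 1"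
    by (simp add: card_insert_if split: if_splits)
  moreover have "3 * card (set xs - {q}) \<le> 2 * t"
    using assms(3) card_length[of xs] card_Diff1_le[of "set xs" q] by linarith
  ultimately have "1 \<le> overflow_majorant t (set xs - {q}) q (2 ^ l) j h"
    using overfull assms(2) by (intro one_le_overflow_majorant) auto
  also have "\<dots> \<le> (\<Sum>j<12. overflow_majorant t (set xs - {q}) q (2 ^ l) j h)"
    using lj(2) by (intro member_le_sum overflow_majorant_nonneg) auto
  finally have majorants: "1 \<le> (\<Sum>j<12. overflow_majorant t (set xs - {q}) q (2 ^ l) j h)" .
  have "real (lp_cost h xs q) \<le> 2 ^ (l + 3)"
    using of_nat_mono[OF lj(3), where 'a=real] by simp
  also have "\<dots> \<le> 2 ^ (l + 3) * (\<Sum>j<12. overflow_majorant t (set xs - {q}) q (2 ^ l) j h)"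
    using mult_left_mono[OF majorants, of "2 ^ (l + 3)"] by simp
  also have "\<dots> \<le> ?bound"
    using lj(1) by (intro member_le_sum mult_nonneg_nonneg sum_nonneg overflow_majorant_nonneg) auto
  finally show ?thesis
    by simp
qed

lemma sum_over_scales_le:
  "(\<Sum>l<n. 2 ^ (l + 3) * (\<Sum>j<(12::nat). 4 * 24 ^ 4 / real (2 ^ l) ^ 2)) \<le> (768 * 24 ^ 4 :: real)"
proof -
  have "2 ^ (l + 3) * (\<Sum>j<(12::nat). 4 * 24 ^ 4 / real (2 ^ l) ^ 2) = 384 * 24 ^ 4 * (1 / 2) ^ l"
    for l :: nat
    by (simp add: power_add power2_eq_square power_one_over field_simps)
  then have "(\<Sum>l<n. 2 ^ (l + 3) * (\<Sum>j<(12::nat). 4 * 24 ^ 4 / real (2 ^ l) ^ 2))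
      = 384 * 24 ^ 4 * (\<Sum>l<n. (1 / 2) ^ l)"
    by (simp add: sum_distrib_left)
  also have "\<dots> \<le> 384 * 24 ^ 4 * 2"
    by (simp add: sum_gp_strict)
  finally show ?thesis
    by simp
qed

context k_independent_hashing
begin

lemma expectation_bucket_excess_given_hash:
  assumes "5 \<le> k" "q < u" "finite S" "S \<subseteq> {..<u}" "q \<notin> S" "3 * card S \<le> 2 * t" "0 < B"
  shows "measure_pmf.expectation H (\<lambda>h. of_bool (h q = v) * bucket_excess t B i S h ^ 4)
    \<le> 4 * real B ^ 2 / t"
proof -
  define U where "U = pmf_of_set {..<t}"
  define p where "p = bucket_prob t B i"
  define Y where "Y = (\<lambda>y. indicator {y. y div B = i} y - p)"
  define Z where "Z = (\<lambda>f. \<Sum>x\<in>S. Y (f x))"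
  have excess: "bucket_excess t B i S h = Z h" for h
    by (simp add: bucket_excess_def Z_def Y_def p_def)
  have U: "finite (set_pmf U)"
    by (simp add: U_def)
  have p: "p = measure_pmf.prob U {y. y div B = i}"
    by (simp add: p_def U_def bucket_prob_def)
  have M: "finite (set_pmf (Pi_pmf S 0 (\<lambda>_. U)))"
    using assms(3) U by (rule finite_set_pmf_Pi_pmf)
  have "measure_pmf.expectation H (\<lambda>h. of_bool (h q = v) * Z h ^ 4)
      = measure_pmf.expectation (Pi_pmf (insert q S) 0 (\<lambda>_. U)) (\<lambda>h. of_bool (h q = v) * Z h ^ 4)"
    unfolding Z_def U_def using assms by (intro expectation_fourth_power_eq_Pi_pmf) auto
  also have "\<dots> = measure_pmf.expectation U (\<lambda>y. of_bool (y = v))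
      * measure_pmf.expectation (Pi_pmf S 0 (\<lambda>_. U)) (\<lambda>f. Z f ^ 4)"
  proof -
    have "Z (f(q := y)) = Z f" for f y
      using assms(5) unfolding Z_def by (intro sum.cong) auto
    then show ?thesis
      using assms(3,5) U M
      by (simp add: expectation_Pi_pmf_insert expectation_pair_pmf_mult[symmetric])
  qed
  also have "\<dots> \<le> 1 / t * (card S * p + 3 * real (card S) ^ 2 * p ^ 2)"
  proof (rule mult_mono)
    have "measure_pmf.expectation U (\<lambda>y. of_bool (y = v)) = (\<Sum>y<t. of_bool (y = v)) / t"
      unfolding U_def using t_pos by (subst integral_pmf_of_set) auto
    also have "(\<Sum>y<t. of_bool (y = v) :: real) \<le> 1"
      by (simp add: of_bool_def sum.delta')
    finally show "measure_pmf.expectation U (\<lambda>y. of_bool (y = v)) \<le> 1 / t"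
      by (simp add: divide_right_mono)
    show "measure_pmf.expectation (Pi_pmf S 0 (\<lambda>_. U)) (\<lambda>f. Z f ^ 4)
        \<le> card S * p + 3 * real (card S) ^ 2 * p ^ 2"
      using moments_sum_Pi_pmf[OF U _ _ _ assms(3), of Y p] centered_indicator_moments[OF U]
      unfolding Z_def Y_def p by blast
  qed (auto intro: integral_nonneg_AE)
  also have "\<dots> \<le> 1 / t * (4 * real B ^ 2)"
  proof (rule mult_left_mono)
    have "card S * p \<le> 2 * real B / 3"
      unfolding p_def using assms(7) t_pos assms(6) by (rule card_mult_bucket_prob_le)
    then have "card S * p \<le> B"
      by linarith
    moreover have "0 \<le> card S * p"
      by (simp add: p_def bucket_prob_def)
    ultimately have "(card S * p) ^ 2 \<le> real B ^ 2"
      by (rule power_mono)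
    moreover have "real B \<le> real B ^ 2"
      using assms(7) by (simp add: power2_eq_square)
    ultimately show "card S * p + 3 * real (card S) ^ 2 * p ^ 2 \<le> 4 * real B ^ 2"
      using \<open>card S * p \<le> B\<close> unfolding power_mult_distrib by linarith
  qed simp
  finally show ?thesis
    unfolding excess by simp
qed

lemma expectation_overflow_majorant:
  assumes "5 \<le> k" "q < u" "finite S" "S \<subseteq> {..<u}" "q \<notin> S" "3 * card S \<le> 2 * t" "0 < B"
  shows "measure_pmf.expectation H (overflow_majorant t S q B j) \<le> 4 * 24 ^ 4 / real B ^ 2"
proof (cases "B < 24")
  case True
  then have "real B ^ 2 \<le> 24 ^ 2"
    by (intro power_mono) auto
  moreover have "overflow_majorant t S q B j = (\<lambda>_. 1)"
    using True by (simp add: fun_eq_iff overflow_majorant_def)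
  ultimately show ?thesis
    using assms(7) by (simp add: field_simps)
next
  case False
  define G where "G v h = of_bool (h q = v) * bucket_excess t B (v div B + 3 - j) S h ^ 4" for v h
  have majorant: "overflow_majorant t S q B j h = (\<Sum>v<t. (24 / B) ^ 4 * G v h)" for h
    using False by (simp add: overflow_majorant_def G_def power_divide power_mult_distrib mult_ac)
  have "integrable (measure_pmf H) (G v)" for v
    using assms by (intro integrable_if_depends_on[of "insert q S"]) (auto simp: G_def bucket_excess_def)
  then have "measure_pmf.expectation H (overflow_majorant t S q B j)
      = (\<Sum>v<t. (24 / B) ^ 4 * measure_pmf.expectation H (G v))"
    unfolding majorant by simp
  also have "\<dots> \<le> (\<Sum>v<t. (24 / B) ^ 4 * (4 * real B ^ 2 / t))"
    using expectation_bucket_excess_given_hash[OF assms] unfolding G_def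
    by (intro sum_mono mult_left_mono) auto
  also have "\<dots> = 4 * 24 ^ 4 / real B ^ 2"
    using t_pos assms(7) by (simp add: field_simps power2_eq_square power4_eq_xxxx)
  finally show ?thesis .
qed

lemma expectation_lp_cost_le:
  assumes "5 \<le> k" "distinct xs" "set xs \<subseteq> {..<u}" "q < u" "3 * length xs \<le> 2 * t"
  shows "measure_pmf.expectation H (\<lambda>h. real (lp_cost h xs q)) \<le> 4 + 768 * 24 ^ 4"
proof -
  define S where "S = set xs - {q}"
  define bound where "bound h = 4 + (\<Sum>l<length xs. 2 ^ (l + 3) * (\<Sum>j<12. overflow_majorant t S q (2 ^ l) j h))"
    for h
  have S: "finite S" "S \<subseteq> {..<u}" "q \<notin> S" "3 * card S \<le> 2 * t"
    using assms card_length[of xs] card_Diff1_le[of "set xs" q] by (auto simp: S_def)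
  have int: "integrable (measure_pmf H) (overflow_majorant t S q B j)" for B j
    using S assms(4) by (intro integrable_if_depends_on[of "insert q S"] overflow_majorant_cong) auto
  have "measure_pmf.expectation H (\<lambda>h. real (lp_cost h xs q)) \<le> measure_pmf.expectation H bound"
  proof (rule integral_mono_AE')
    show "integrable (measure_pmf H) bound"
      using int by (simp add: bound_def[abs_def])
    show "AE h in measure_pmf H. real (lp_cost h xs q) \<le> bound h"
      using assms hash_range unfolding bound_def S_def
      by (auto simp: AE_measure_pmf_iff intro!: lp_cost_le_overflow_majorants)
    show "AE h in measure_pmf H. 0 \<le> bound h"
      unfolding bound_def
      by (intro AE_I2 add_nonneg_nonneg sum_nonneg mult_nonneg_nonneg overflow_majorant_nonneg) auto
  qed
  also have "\<dots> = 4 + (\<Sum>l<length xs. 2 ^ (l + 3) * (\<Sum>j<12. measure_pmf.expectation H (overflow_majorant t S q (2 ^ l) j)))"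
    using int by (simp add: bound_def[abs_def])
  also have "\<dots> \<le> 4 + (\<Sum>l<length xs. 2 ^ (l + 3) * (\<Sum>j<(12::nat). 4 * 24 ^ 4 / real (2 ^ l) ^ 2))"
    using S assms by (intro add_left_mono sum_mono mult_left_mono expectation_overflow_majorant) auto
  also have "\<dots> \<le> 4 + 768 * 24 ^ 4"
    using sum_over_scales_le by simp
  finally show ?thesis
    by simp
qed

end

theorem theorem6:
  "\<exists>C::real. \<forall>(H :: (nat \<Rightarrow> nat) pmf) u t xs q.
      k_independent 5 u t H \<longrightarrow>
      (\<forall>h\<in>set_pmf H. \<forall>x<u. h x < t) \<longrightarrow>
      (\<exists>k. t = 2 ^ k) \<longrightarrow>
      distinct xs \<longrightarrow> set xs \<subseteq> {..<u} \<longrightarrow>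
      2 * real t \<ge> 3 * real (length xs) \<longrightarrow>
      q < u \<longrightarrow>
      measure_pmf.expectation H (\<lambda>h. real (lp_cost h xs q)) \<le> C"
proof (intro exI[of _ "768 * 24 ^ 4 + 5"] allI impI)
  fix H :: "(nat \<Rightarrow> nat) pmf" and u t xs q
  assume independent: "k_independent 5 u t H" and range: "\<forall>h\<in>set_pmf H. \<forall>x<u. h x < t"
    and power_of_two: "\<exists>k. t = 2 ^ k" and xs: "distinct xs" "set xs \<subseteq> {..<u}"
    and load: "2 * real t \<ge> 3 * real (length xs)" and q: "q < u"
  show "measure_pmf.expectation H (\<lambda>h. real (lp_cost h xs q)) \<le> 768 * 24 ^ 4 + 5"
  proof (cases "5 \<le> u")
    case True
    interpret k_independent_hashing 5 u t H
      \<comment> \<open>that \<open>t\<close> is a power of two only serves to make it positive\<close>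
      using independent range True power_of_two by unfold_locales auto
    show ?thesis
      using expectation_lp_cost_le[OF order_refl xs q] load by simp
  next
    case False
    \<comment> \<open>5-independence is vacuous for \<open>u < 5\<close>, but then there are at most four keys\<close>
    have "length xs \<le> 4"
      using distinct_card[OF xs(1)] card_mono[OF _ xs(2)] False by fastforce
    then have "lp_cost h xs q \<le> 5" for h
      using lp_cost_le_length[OF xs(1), of h q] by linarith
    then have "measure_pmf.expectation H (\<lambda>h. real (lp_cost h xs q)) \<le> 5"
      by (intro measure_pmf.integral_le_const measure_pmf.integrable_const_bound[where B = 5] AE_I2) auto
    then show ?thesis
      by simp
  qed
qed

end
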